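(* Let $k=\mathbb{F}_q$ with $q=2^m\geq 4$ and $n\geq 1$. Suppose $\sigma\in\mathrm{PGL}_{n+1}(k)$ induces a permutation of $\mathbb{P}^n(k)$ of order $2^r$, and for $i=0,\dots,r$ let $c_i$ be the number of $2^i$-cycles in its cycle decomposition (so $c_0$ is the number of fixed points). Then $c_0$ is odd and $c_1+\cdots+c_r$ is even. Moreover, if $n=1$, then exactly one of the following holds: (1) $c_0=q+1$ and $c_i=0$ for all $1\leq i\leq r$ (i.e. $\sigma$ acts as the identity); (2) $c_0=1$ and there is a unique $1\leq j\leq r$ with $c_j\neq 0$, and this $c_j$ equals $q/2^j>1$. *)

theory Defs
  imports "HOL-Analysis.Analysis"
begin

definition proj_points :: "('k::field ^ 'n) set set" where
  "proj_points = {{c *s v | c. c \<noteq> 0} | v. v \<noteq> 0}"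

text \<open>The map on projective points induced by a matrix A (an element of GL, hence of PGL).\<close>
definition proj_map :: "'k::field ^ 'n ^ 'n \<Rightarrow> ('k ^ 'n) set \<Rightarrow> ('k ^ 'n) set" where
  "proj_map A P = (\<lambda>v. A *v v) ` P"

definition perm_order :: "('a \<Rightarrow> 'a) \<Rightarrow> 'a set \<Rightarrow> nat" where
  "perm_order f S = (LEAST k. k > 0 \<and> (\<forall>x\<in>S. (f ^^ k) x = x))"

definition orbit_of :: "('a \<Rightarrow> 'a) \<Rightarrow> 'a \<Rightarrow> 'a set" where
  "orbit_of f x = {(f ^^ j) x | j. True}"

definition cycle_count :: "('a \<Rightarrow> 'a) \<Rightarrow> 'a set \<Rightarrow> nat \<Rightarrow> nat" where
  "cycle_count f S l = card {C. \<exists>x\<in>S. C = orbit_of f x \<and> card C = l}"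

end

(*
  Since sigma^(2^r) fixes every point of P^n, A^(2^r) is a scalar, which in characteristic 2 can
  be written nu^(2^r); then N = A - nu is nilpotent and N^(2^i) = A^(2^i) - nu^(2^i). Injectivity
  of the Frobenius shows that the points fixed by sigma^(2^i) are exactly the lines in
  K_i = ker N^(2^i). With d_i = dim K_i and q = |k|, counting lines gives

    (q - 1) c_0 = q^(d_0) - 1   and   (q - 1) 2^i c_i = q^(d_i) - q^(d_(i-1)).

  As d_0 >= 1, c_0 is odd. Kernels of the powers of N grow strictly until they stabilise, so a
  jump d_(i-1) < d_i forces d_(i-1) >= 2^(i-1); then 2^(i+1) divides q^(d_(i-1)) and c_i is even.
  For n = 1 the chain d_0 <= ... <= d_r = 2 is either constantly 2 (sigma is the identity) or
  jumps once from 1 to 2, at the unique j with c_j <> 0, where 2^j c_j = q.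
*)
theory Submission
  imports Defs "HOL-Combinatorics.Orbits" "HOL-Combinatorics.Cycles"
    "HOL-Computational_Algebra.Primes"
begin

section \<open>Orbits and cycle counts\<close>

lemma self_in_orbit_if_funpow_eq:
  assumes "(f ^^ n) x = x" "0 < n"
  shows "x \<in> orbit f x"
  using assms unfolding orbit_altdef by (intro CollectI exI[of _ n]) simp

lemma orbit_of_eq_orbit:
  assumes "(f ^^ n) x = x" "0 < n"
  shows "orbit_of f x = orbit f x"
  using orbit_altdef_self_in[OF self_in_orbit_if_funpow_eq[OF assms]] by (simp add: orbit_of_def)

lemma card_orbit_of:
  assumes "(f ^^ n) x = x" "0 < n"
  shows "card (orbit_of f x) = funpow_dist1 f x x"
proof -
  have x: "x \<in> orbit f x" using self_in_orbit_if_funpow_eq[OF assms] .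
  show ?thesis
    using orbit_conv_funpow_dist1[OF x] inj_on_funpow_dist1[OF x]
    by (simp add: orbit_of_eq_orbit[OF assms] card_image)
qed

lemma funpow_eq_self_iff_card_orbit_of_dvd:
  assumes "(f ^^ n) x = x" "0 < n"
  shows "(f ^^ k) x = x \<longleftrightarrow> card (orbit_of f x) dvd k"
proof -
  define p where "p = funpow_dist1 f x x"
  have p: "(f ^^ p) x = x" "0 < p"
    using funpow_dist1_prop[OF self_in_orbit_if_funpow_eq[OF assms]] by (simp_all add: p_def)
  have "(f ^^ k) x = x \<longleftrightarrow> k mod p = 0"
  proof
    assume "(f ^^ k) x = x"
    then have "(f ^^ (k mod p)) x = x" by (simp add: funpow_mod_eq[OF p(1)])
    moreover have "k mod p < p" using p(2) by simp
    ultimately show "k mod p = 0"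
      using funpow_dist1_least[of "k mod p" f x x] unfolding p_def by auto
  qed (simp add: funpow_mod_eq[OF p(1), symmetric])
  then show ?thesis by (simp add: card_orbit_of[OF assms] p_def mod_eq_0_iff_dvd)
qed

lemma orbit_of_eq_if_mem:
  assumes "(f ^^ n) x = x" "0 < n" and "y \<in> orbit_of f x"
  shows "orbit_of f y = orbit_of f x"
proof -
  have x: "x \<in> orbit f x" using self_in_orbit_if_funpow_eq[OF assms(1,2)] .
  have y: "y \<in> orbit f x" using assms(3) by (simp add: orbit_of_eq_orbit[OF assms(1,2)])
  have "orbit f y = orbit f x"
    using orbit_trans[OF _ y] orbit_trans[OF _ orbit_swap[OF x y]] by blast
  moreover have "orbit_of f y = orbit f y"
    using orbit_altdef_self_in[OF self_in_orbit_trans[OF x y]] by (simp add: orbit_of_def)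
  ultimately show ?thesis by (simp add: orbit_of_eq_orbit[OF assms(1,2)])
qed

lemma orbit_of_subset:
  assumes "f ` S \<subseteq> S" "x \<in> S"
  shows "orbit_of f x \<subseteq> S"
proof -
  have "(f ^^ j) x \<in> S" for j by (induction j) (use assms in auto)
  then show ?thesis unfolding orbit_of_def by blast
qed

lemma cycle_count_mult_eq_card:
  assumes "finite S" "f ` S \<subseteq> S" "\<forall>x\<in>S. (f ^^ n) x = x" "0 < n"
  shows "l * cycle_count f S l = card {x\<in>S. card (orbit_of f x) = l}"
proof -
  let ?C = "{C. \<exists>x\<in>S. C = orbit_of f x \<and> card C = l}"
  have union: "\<Union>?C = {x\<in>S. card (orbit_of f x) = l}"
  proof (intro equalityI subsetI)
    fix y assume "y \<in> \<Union>?C"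
    then obtain x where x: "x \<in> S" "card (orbit_of f x) = l" "y \<in> orbit_of f x" by auto
    then have "orbit_of f y = orbit_of f x" using assms(3,4) by (intro orbit_of_eq_if_mem) auto
    then show "y \<in> {x\<in>S. card (orbit_of f x) = l}"
      using orbit_of_subset[OF assms(2) x(1)] x by auto
  next
    fix y assume "y \<in> {x\<in>S. card (orbit_of f x) = l}"
    moreover have "y \<in> orbit_of f y" unfolding orbit_of_def by (auto intro: exI[of _ 0])
    ultimately show "y \<in> \<Union>?C" by blast
  qed
  have "l * card ?C = card (\<Union>?C)"
  proof (rule card_partition)
    show "finite ?C"
    proof (rule finite_subset)
      show "?C \<subseteq> Pow S" using orbit_of_subset[OF assms(2)] by blast
    qed (use assms(1) in simp)
    show "c1 \<inter> c2 = {}" if c: "c1 \<in> ?C" "c2 \<in> ?C" "c1 \<noteq> c2" for c1 c2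
    proof -
      obtain x1 x2 where x: "x1 \<in> S" "x2 \<in> S" "c1 = orbit_of f x1" "c2 = orbit_of f x2"
        using c(1,2) by blast
      have "orbit_of f y = c1" "orbit_of f y = c2" if "y \<in> c1" "y \<in> c2" for y
        using orbit_of_eq_if_mem[of n f x1 y] orbit_of_eq_if_mem[of n f x2 y] x that assms(3,4)
        by simp_all
      then show ?thesis using c(3) by blast
    qed
    show "finite (\<Union>?C)" using union assms(1) by simp
    show "card c = l" if "c \<in> ?C" for c using that by blast
  qed
  then show ?thesis unfolding cycle_count_def union .
qed

lemma card_orbit_of_eq_two_power_iff:
  assumes "(f ^^ 2 ^ r) x = x" "0 < i"
  shows "card (orbit_of f x) = 2 ^ i \<longleftrightarrow> (f ^^ 2 ^ i) x = x \<and> (f ^^ 2 ^ (i - 1)) x \<noteq> x"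
proof -
  have dvd_iff: "(f ^^ k) x = x \<longleftrightarrow> card (orbit_of f x) dvd k" for k
    using funpow_eq_self_iff_card_orbit_of_dvd[OF assms(1)] by simp
  have "card (orbit_of f x) dvd 2 ^ r" using dvd_iff assms(1) by simp
  then obtain a where a: "card (orbit_of f x) = 2 ^ a"
    using divides_primepow_nat[OF two_is_prime_nat] by auto
  have fix_iff: "(f ^^ 2 ^ k) x = x \<longleftrightarrow> a \<le> k" for k
    using dvd_iff[of "2 ^ k"] by (simp add: a dvd_power_iff_le)
  show ?thesis unfolding fix_iff a using assms(2) by (simp add: power_inject_exp) linarith
qed

lemma cycle_count_one_eq_card_fixed_points:
  assumes "finite S" "f ` S \<subseteq> S" "\<forall>x\<in>S. (f ^^ n) x = x" "0 < n"
  shows "cycle_count f S 1 = card {x\<in>S. f x = x}"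
proof -
  have "card (orbit_of f x) = 1 \<longleftrightarrow> f x = x" if "x \<in> S" for x
    using funpow_eq_self_iff_card_orbit_of_dvd[of n f x 1] that assms(3,4) by simp
  then have "{x\<in>S. card (orbit_of f x) = 1} = {x\<in>S. f x = x}" by blast
  then show ?thesis using cycle_count_mult_eq_card[OF assms, of 1] by simp
qed

lemma cycle_count_two_power_eq_card_diff:
  assumes "finite S" "f ` S \<subseteq> S" "\<forall>x\<in>S. (f ^^ 2 ^ r) x = x" "0 < i"
  shows "2 ^ i * cycle_count f S (2 ^ i)
    = card {x\<in>S. (f ^^ 2 ^ i) x = x} - card {x\<in>S. (f ^^ 2 ^ (i - 1)) x = x}"
proof -
  have "(2::nat) ^ i mod 2 ^ (i - 1) = 0" using assms(4) by (simp add: le_imp_power_dvd)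
  then have fix_mono: "{x\<in>S. (f ^^ 2 ^ (i - 1)) x = x} \<subseteq> {x\<in>S. (f ^^ 2 ^ i) x = x}"
    using funpow_mod_eq[of "2 ^ (i - 1)" f _ "2 ^ i"] by auto
  have "{x\<in>S. card (orbit_of f x) = 2 ^ i}
      = {x\<in>S. (f ^^ 2 ^ i) x = x} - {x\<in>S. (f ^^ 2 ^ (i - 1)) x = x}"
    using card_orbit_of_eq_two_power_iff[of r f _ i] assms(3,4) by auto
  then show ?thesis
    using cycle_count_mult_eq_card[OF assms(1-3)] fix_mono assms(1)
    by (simp add: card_Diff_subset finite_subset)
qed

section \<open>Fields of characteristic two\<close>

lemma CHAR_dvd_card: "CHAR('k::{ring_1,finite}) dvd CARD('k)"
proof -
  define f where "f x = x + (1::'k)" for x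
  have iter: "(f ^^ k) x = x + of_nat k" for k x
    by (induction k) (simp_all add: f_def add.assoc)
  have pos: "CHAR('k) > 0" by (simp add: finite_imp_CHAR_pos)
  have per: "\<forall>x\<in>UNIV. (f ^^ CHAR('k)) x = x" by (simp add: iter)
  have "card (orbit_of f x) dvd k \<longleftrightarrow> CHAR('k) dvd k" for x k
    using funpow_eq_self_iff_card_orbit_of_dvd[of "CHAR('k)" f x k] pos
    by (simp add: iter of_nat_eq_0_iff_char_dvd)
  then have "card (orbit_of f x) = CHAR('k)" for x by (meson dvd_antisym dvd_refl)
  then have "CHAR('k) * cycle_count f UNIV CHAR('k) = CARD('k)"
    using cycle_count_mult_eq_card[OF _ _ per pos, of "CHAR('k)"] by simp
  then show ?thesis by (rule dvdI[OF sym])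
qed

lemma CHAR_eq_two_if_card_two_power:
  assumes "CARD('k::{field,finite}) = 2 ^ m"
  shows "CHAR('k) = 2"
proof -
  have "prime CHAR('k)" by (simp add: prime_CHAR_semidom finite_imp_CHAR_pos)
  moreover have "CHAR('k) dvd 2" using CHAR_dvd_card[where 'k='k] assms
    by (metis calculation prime_dvd_power_nat)
  ultimately show ?thesis using primes_dvd_imp_eq two_is_prime_nat by blast
qed

lemma frobenius_power_inj:
  fixes x y :: "'k::field"
  assumes "CHAR('k) = 2" and "x ^ 2 ^ i = y ^ 2 ^ i"
  shows "x = y"
proof -
  have "(x + y) ^ 2 ^ i = x ^ 2 ^ i + y ^ 2 ^ i"
    using assms(1) by (intro freshmans_dream') simp_all
  also have "\<dots> = 0" using assms by (simp add: minus_CHAR_2[symmetric])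
  finally show ?thesis using assms(1) by (simp add: minus_CHAR_2[symmetric])
qed

lemma frobenius_power_surjE:
  fixes y :: "'k::{field,finite}"
  assumes "CHAR('k) = 2"
  obtains x where "x ^ 2 ^ i = y"
proof -
  have "inj (\<lambda>x::'k. x ^ 2 ^ i)" using frobenius_power_inj[OF assms] by (intro injI)
  then have "surj (\<lambda>x::'k. x ^ 2 ^ i)" by (simp add: finite_UNIV_inj_surj)
  then show ?thesis using that by (metis surjD)
qed

section \<open>Iterated linear maps\<close>

lemma linear_funpow:
  assumes "Vector_Spaces.linear s s f"
  shows "Vector_Spaces.linear s s (f ^^ n)"
proof (induction n)
  case 0
  have "vector_space s" using assms by (simp add: Vector_Spaces.linear_iff)
  then show ?case by (simp add: Vector_Spaces.linear_iff)
next
  case (Suc n)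
  then show ?case using Vector_Spaces.linear_compose[OF Suc assms] by (simp only: funpow.simps)
qed

lemma funpow_two_power_minus_scale:
  fixes g :: "'k::field ^ 'n \<Rightarrow> 'k ^ 'n"
  assumes "CHAR('k) = 2" and lin: "Vector_Spaces.linear (*s) (*s) g"
  shows "(\<lambda>v. g v - c *s v) ^^ 2 ^ i = (\<lambda>v. (g ^^ 2 ^ i) v - c ^ 2 ^ i *s v)"
proof (induction i)
  case 0
  then show ?case by simp
next
  case (Suc i)
  let ?h = "g ^^ 2 ^ i" and ?c = "c ^ 2 ^ i"
  have h: "?h (x + y) = ?h x + ?h y" "?h (a *s x) = a *s ?h x" for a x y
    using linear_funpow[OF lin, of "2 ^ i"] by (simp_all add: Vector_Spaces.linear_iff)
  have minus_eq_plus: "x - y = x + y" for x y :: "'k ^ 'n"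
    using assms(1) by (simp add: vec_eq_iff minus_CHAR_2)
  have double: "x + x = 0" for x :: "'k ^ 'n"
    using minus_eq_plus[of x x] by simp
  have "(\<lambda>v. g v - c *s v) ^^ 2 ^ Suc i
      = ((\<lambda>v. g v - c *s v) ^^ 2 ^ i) \<circ> ((\<lambda>v. g v - c *s v) ^^ 2 ^ i)"
    by (simp add: funpow_add mult_2)
  also have "\<dots> = (\<lambda>v. ?h (?h v) + (?c * ?c) *s v + (?c *s ?h v + ?c *s ?h v))"
    unfolding Suc by (simp add: fun_eq_iff minus_eq_plus h add_ac vector_smult_assoc)
  also have "\<dots> = (\<lambda>v. (g ^^ 2 ^ Suc i) v - c ^ 2 ^ Suc i *s v)"
    by (simp add: double minus_eq_plus funpow_add mult_2 power_add)
  finally show ?case .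
qed

lemma linear_matrix_minus_scale:
  "Vector_Spaces.linear (*s) (*s) (\<lambda>v. A *v v - c *s (v :: 'k::field ^ 'n))"
  unfolding Vector_Spaces.linear_iff
proof (intro conjI allI)
  show "A *v (x + y) - c *s (x + y) = (A *v x - c *s x) + (A *v y - c *s y)" for x y
    by (simp add: matrix_vector_right_distrib vector_add_ldistrib)
  show "A *v (a *s x) - c *s (a *s x) = a *s (A *v x - c *s x)" for a x
    by (simp add: vec.scale vector_smult_assoc vector_ssub_ldistrib mult.commute)
qed (rule vec.vector_space_axioms)+

lemma funpow_mult_eigen:
  assumes "(f ^^ p) v = c *s v" and "\<And>a w. f (a *s w) = a *s f w"
  shows "(f ^^ (p * j)) v = c ^ j *s (v :: 'k::field ^ 'n)"
proof (induction j)
  case (Suc j)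
  have scale: "(f ^^ n) (a *s w) = a *s (f ^^ n) w" for n a w
    by (induction n) (simp_all add: assms(2))
  have "(f ^^ (p * Suc j)) v = (f ^^ (p * j)) ((f ^^ p) v)"
    by (simp only: mult_Suc_right add.commute[of p] funpow_add comp_apply)
  also have "\<dots> = c ^ Suc j *s v"
    using assms(1) Suc by (simp add: scale vector_smult_assoc mult.commute)
  finally show ?case .
qed simp

lemma scalar_if_every_vector_eigenE:
  fixes g :: "'k::field ^ 'n \<Rightarrow> 'k ^ 'n"
  assumes lin: "Vector_Spaces.linear (*s) (*s) g" and eigen: "\<And>v. \<exists>c. g v = c *s v"
  obtains c where "\<And>v. g v = c *s v"
proof -
  interpret g: module_hom "(*s)" "(*s)" g using lin by (simp add: linear_iff_module_hom)
  define e where "e i = (axis i 1 :: 'k ^ 'n)" for i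
  obtain \<mu> where \<mu>: "\<And>i. g (e i) = \<mu> i *s e i"
    using choice[of "\<lambda>i c. g (e i) = c *s e i"] eigen by blast
  define c where "c = \<mu> undefined"
  have \<mu>_eq: "\<mu> i = c" for i
  proof (cases "i = undefined")
    case False
    obtain c' where "g (e i + e undefined) = c' *s (e i + e undefined)" using eigen by blast
    then have "\<mu> i *s e i + c *s e undefined = c' *s (e i + e undefined)"
      by (simp add: g.add \<mu> c_def)
    then have "(\<mu> i *s e i + c *s e undefined) $ k = (c' *s (e i + e undefined)) $ k" for k
      by simp
    from this[of i] this[of undefined] show ?thesis
      using False by (simp add: e_def axis_def)
  qed (simp add: c_def)
  have "g v = c *s v" for v
  proof -
    have "g v = g (\<Sum>j\<in>UNIV. v $ j *s e j)" by (simp add: e_def basis_expansion)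
    also have "\<dots> = (\<Sum>j\<in>UNIV. v $ j *s (c *s e j))" by (simp add: g.sum g.scale \<mu> \<mu>_eq)
    also have "\<dots> = c *s (\<Sum>j\<in>UNIV. v $ j *s e j)"
      by (simp add: vec.scale_sum_right vector_smult_assoc mult.commute)
    also have "\<dots> = c *s v" by (simp add: e_def basis_expansion)
    finally show ?thesis .
  qed
  then show ?thesis by (rule that)
qed

lemma card_subspace:
  fixes W :: "('k::{field,finite} ^ 'n) set"
  assumes "vec.subspace W"
  shows "card W = CARD('k) ^ vec.dim W"
proof -
  obtain B where B: "B \<subseteq> W" "vec.independent B" "W \<subseteq> vec.span B" "card B = vec.dim W"
    using vec.basis_exists by blast
  let ?comb = "\<lambda>u. \<Sum>v\<in>B. u v *s v"
  have "W = range ?comb"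
    using vec.span_subspace[OF B(1,3) assms] vec.span_finite[of B] by simp
  also have "range ?comb = ?comb ` (B \<rightarrow>\<^sub>E UNIV)"
  proof (intro equalityI subsetI)
    fix w assume "w \<in> range ?comb"
    then obtain u where "w = ?comb u" by (rule rangeE)
    moreover have "?comb u = ?comb (restrict u B)" by (intro sum.cong) simp_all
    ultimately have "w = ?comb (restrict u B)" by (rule trans)
    moreover have "restrict u B \<in> B \<rightarrow>\<^sub>E UNIV" by simp
    ultimately show "w \<in> ?comb ` (B \<rightarrow>\<^sub>E UNIV)" by (rule image_eqI)
  qed (erule imageE, simp)
  finally have W: "W = ?comb ` (B \<rightarrow>\<^sub>E UNIV)" .
  have "inj_on ?comb (B \<rightarrow>\<^sub>E UNIV)"
  proof (rule inj_onI)
    fix u u' assume u: "u \<in> B \<rightarrow>\<^sub>E UNIV" "u' \<in> B \<rightarrow>\<^sub>E UNIV" and eq: "?comb u = ?comb u'"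
    have "(\<Sum>v\<in>B. (u v - u' v) *s v) = 0"
      using eq by (simp add: vector_sub_rdistrib sum_subtractf)
    then have "u v - u' v = 0" if "v \<in> B" for v
      using vec.independentD[OF B(2) _ order_refl _ that, of "\<lambda>v. u v - u' v"] by simp
    then show "u = u'" using u by (intro extensionalityI[of _ B]) (auto simp: PiE_iff)
  qed
  then have "card W = card (B \<rightarrow>\<^sub>E (UNIV :: 'k set))" by (simp add: W card_image)
  also have "\<dots> = CARD('k) ^ card B" by (simp add: card_PiE)
  finally show ?thesis using B(4) by simp
qed

lemma funpow_kernel_mono:
  fixes g :: "'a::zero \<Rightarrow> 'a"
  assumes "g 0 = 0" "j \<le> k"
  shows "{v. (g ^^ j) v = 0} \<subseteq> {v. (g ^^ k) v = 0}"
proof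
  have zero: "(g ^^ l) 0 = 0" for l by (induction l) (simp_all add: assms(1))
  fix v assume "v \<in> {v. (g ^^ j) v = 0}"
  then have "(g ^^ (k - j)) ((g ^^ j) v) = 0" by (simp add: zero)
  then show "v \<in> {v. (g ^^ k) v = 0}"
    using assms(2) by (simp flip: funpow_add[unfolded comp_def, THEN fun_cong])
qed

lemma funpow_kernel_stable:
  fixes g :: "'a::zero \<Rightarrow> 'a"
  assumes "g 0 = 0" "{v. (g ^^ j) v = 0} = {v. (g ^^ Suc j) v = 0}"
  shows "{v. (g ^^ (j + l)) v = 0} = {v. (g ^^ j) v = 0}"
proof (induction l)
  case (Suc l)
  have "(g ^^ (j + l)) v = 0" if "(g ^^ (j + Suc l)) v = 0" for v
  proof -
    have "(g ^^ Suc j) ((g ^^ l) v) = 0"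
      using that by (simp add: funpow_add funpow_swap1 add.commute)
    then have "(g ^^ j) ((g ^^ l) v) = 0" using assms(2) by blast
    then show ?thesis by (simp add: funpow_add add.commute)
  qed
  then show ?case using Suc funpow_kernel_mono[of g "j + l" "j + Suc l", OF assms(1)] by auto
qed simp

lemma funpow_kernel_psubset:
  fixes g :: "'a::zero \<Rightarrow> 'a"
  assumes "g 0 = 0" "j \<le> k" "{v. (g ^^ j) v = 0} \<noteq> {v. (g ^^ k) v = 0}"
  shows "{v. (g ^^ j) v = 0} \<subset> {v. (g ^^ Suc j) v = 0}"
  using funpow_kernel_mono[of g j "Suc j", OF assms(1)] funpow_kernel_stable[of g j "k - j", OF assms(1)]
    assms(2,3) by force

lemma subspace_funpow_kernel:
  fixes g :: "'k::field ^ 'n \<Rightarrow> 'k ^ 'n"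
  assumes "Vector_Spaces.linear (*s) (*s) g"
  shows "vec.subspace {v. (g ^^ j) v = 0}"
  using module_hom.subspace_kernel[OF linear_funpow[OF assms, unfolded linear_iff_module_hom]] .

lemma dim_funpow_kernel_ge:
  fixes g :: "'k::field ^ 'n \<Rightarrow> 'k ^ 'n"
  assumes lin: "Vector_Spaces.linear (*s) (*s) g"
    and "j \<le> k" "{v. (g ^^ j) v = 0} \<noteq> {v. (g ^^ k) v = 0}"
  shows "j \<le> vec.dim {v. (g ^^ j) v = 0}"
  using assms(2,3)
proof (induction j)
  case (Suc j)
  have g0: "g 0 = 0" using module_hom.zero[OF lin[unfolded linear_iff_module_hom]] .
  have "{v. (g ^^ j) v = 0} \<noteq> {v. (g ^^ k) v = 0}"
    using funpow_kernel_mono[of g j "Suc j", OF g0] funpow_kernel_mono[of g "Suc j" k, OF g0] Suc.prems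
    by auto
  then have "j \<le> vec.dim {v. (g ^^ j) v = 0}"
    and "{v. (g ^^ j) v = 0} \<subset> {v. (g ^^ Suc j) v = 0}"
    using Suc funpow_kernel_psubset[of g j k, OF g0] by simp_all
  moreover have "vec.dim {v. (g ^^ j) v = 0} < vec.dim {v. (g ^^ Suc j) v = 0}"
    using calculation(2) vec.dim_psubset subspace_funpow_kernel[OF lin]
    by (metis vec.span_eq_iff)
  ultimately show ?case by simp
qed simp

lemma nilpotent_kernel_dims:
  fixes g :: "'k::field ^ 'n \<Rightarrow> 'k ^ 'n"
  assumes lin: "Vector_Spaces.linear (*s) (*s) g" and nil: "\<And>v. (g ^^ 2 ^ r) v = 0"
  defines "d i \<equiv> vec.dim {v. (g ^^ 2 ^ i) v = 0}"
  shows "mono d" and "d r = CARD('n)" and "1 \<le> d 0" and "d i < d (Suc i) \<Longrightarrow> 2 ^ i \<le> d i"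
proof -
  have g0: "g 0 = 0" using module_hom.zero[OF lin[unfolded linear_iff_module_hom]] .
  show "mono d"
    unfolding d_def by (intro monoI vec.dim_subset funpow_kernel_mono[of g, OF g0]) simp
  have top: "{v. (g ^^ 2 ^ r) v = 0} = UNIV" using nil by simp
  then show "d r = CARD('n)" unfolding d_def by (simp only: vec_dim_card)
  have "axis undefined 1 \<notin> {v. (g ^^ 0) v = (0 :: 'k ^ 'n)}" by (simp add: axis_eq_0_iff)
  then have "{v. (g ^^ 0) v = 0} \<noteq> {v. (g ^^ 2 ^ r) v = 0}" unfolding top by blast
  then have "{v. (g ^^ 0) v = 0} \<subset> {v. (g ^^ Suc 0) v = 0}"
    by (intro funpow_kernel_psubset[of g, OF g0]) simp_all
  then obtain x where "x \<in> {v. (g ^^ Suc 0) v = 0}" "x \<notin> {v. (g ^^ 0) v = 0}"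
    by (meson psubset_imp_ex_mem DiffE)
  then have "\<not> {v. (g ^^ 2 ^ 0) v = 0} \<subseteq> {0}" by auto
  then have "d 0 \<noteq> 0" unfolding d_def vec.dim_eq_0 .
  then show "1 \<le> d 0" by simp
  show "2 ^ i \<le> d i" if "d i < d (Suc i)"
    using that dim_funpow_kernel_ge[OF lin, of "2 ^ i" "2 ^ Suc i"] unfolding d_def by fastforce
qed

section \<open>Projective points\<close>

definition proj_point :: "'k::field ^ 'n \<Rightarrow> ('k ^ 'n) set" where
  "proj_point v = {c *s v | c. c \<noteq> 0}"

lemma proj_points_eq_image: "proj_points = proj_point ` (UNIV - {0})"
  unfolding proj_points_def proj_point_def by auto

lemma mem_proj_point_self: "v \<in> proj_point v"
  unfolding proj_point_def by (auto intro: exI[of _ 1])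

lemma proj_point_scale: "c \<noteq> 0 \<Longrightarrow> proj_point (c *s v) = proj_point v"
  unfolding proj_point_def
  by (auto simp: vector_smult_assoc) (metis divide_eq_0_iff nonzero_eq_divide_eq vector_smult_assoc)

lemma proj_point_eq_iff: "proj_point w = proj_point v \<longleftrightarrow> (\<exists>c. c \<noteq> 0 \<and> w = c *s v)"
proof
  assume "proj_point w = proj_point v"
  then show "\<exists>c. c \<noteq> 0 \<and> w = c *s v"
    using mem_proj_point_self[of w] unfolding proj_point_def by auto
qed (auto simp: proj_point_scale)

lemma proj_point_eq_if_mem: "w \<in> proj_point v \<Longrightarrow> proj_point w = proj_point v"
  using proj_point_eq_iff[of w v] unfolding proj_point_def[of v] by blast

lemma card_proj_point:
  fixes v :: "'k::{field,finite} ^ 'n"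
  assumes "v \<noteq> 0"
  shows "card (proj_point v) = CARD('k) - 1"
proof -
  have "proj_point v = (\<lambda>c. c *s v) ` (UNIV - {0})" unfolding proj_point_def by auto
  moreover have "inj (\<lambda>c. c *s v)"
    using assms by (intro injI) (metis right_minus_eq vector_sub_rdistrib vector_mul_eq_0)
  ultimately show ?thesis by (simp add: card_image inj_on_subset card_Diff_subset)
qed

lemma proj_point_subset_iff:
  assumes "vec.subspace W"
  shows "proj_point v \<subseteq> W \<longleftrightarrow> v \<in> W"
proof
  show "v \<in> W" if "proj_point v \<subseteq> W" using that mem_proj_point_self by blast
  show "proj_point v \<subseteq> W" if "v \<in> W"
    using that vec.subspace_scale[OF assms] unfolding proj_point_def by blast
qed

lemma card_proj_points_subspace:
  fixes W :: "('k::{field,finite} ^ 'n) set"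
  assumes "vec.subspace W"
  shows "(CARD('k) - 1) * card {P\<in>proj_points. P \<subseteq> W} = card W - 1"
proof -
  let ?C = "{P\<in>proj_points. P \<subseteq> W}"
  have point: "\<exists>u. u \<noteq> 0 \<and> P = proj_point u" if "P \<in> proj_points" for P
    using that by (auto simp: proj_points_eq_image)
  have union: "\<Union>?C = W - {0}"
  proof (intro equalityI subsetI)
    fix w assume "w \<in> \<Union>?C"
    then obtain u where "u \<noteq> 0" "w \<in> proj_point u" "proj_point u \<subseteq> W"
      using point by blast
    then show "w \<in> W - {0}" unfolding proj_point_def by auto
  next
    fix w assume w: "w \<in> W - {0}"
    then have "proj_point w \<in> ?C"
      using proj_point_subset_iff[OF assms] by (simp add: proj_points_eq_image)
    then show "w \<in> \<Union>?C" using mem_proj_point_self by blast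
  qed
  have "(CARD('k) - 1) * card ?C = card (\<Union>?C)"
  proof (rule card_partition)
    show "card P = CARD('k) - 1" if "P \<in> ?C" for P
    proof -
      have "P \<in> proj_points" using that by simp
      then obtain u where "u \<noteq> 0" "P = proj_point u" using point by blast
      then show ?thesis by (simp add: card_proj_point)
    qed
    show "P \<inter> Q = {}" if PQ: "P \<in> ?C" "Q \<in> ?C" "P \<noteq> Q" for P Q
    proof (rule ccontr)
      assume "P \<inter> Q \<noteq> {}"
      then obtain x where x: "x \<in> P" "x \<in> Q" by blast
      have "P \<in> proj_points" "Q \<in> proj_points" using PQ by simp_all
      then obtain u u' where "P = proj_point u" "Q = proj_point u'" using point by metis
      then have "proj_point x = P" "proj_point x = Q"
        using x proj_point_eq_if_mem[of x u] proj_point_eq_if_mem[of x u'] by simp_all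
      then show False using PQ(3) by (simp only:)
    qed
  qed (rule finite_class.finite)+
  also have "\<dots> = card W - 1"
    using union vec.subspace_0[OF assms] by (simp add: card_Diff_singleton)
  finally show ?thesis .
qed

lemma proj_map_proj_point: "proj_map A (proj_point v) = proj_point (A *v v)"
  unfolding proj_map_def proj_point_def by (simp add: setcompr_eq_image image_image vec.scale)

lemma funpow_proj_map_proj_point:
  "(proj_map A ^^ k) (proj_point v) = proj_point (((*v) A ^^ k) v)"
  by (induction k) (simp_all add: proj_map_proj_point)

lemma proj_map_image_proj_points:
  fixes A :: "'k::field ^ 'n ^ 'n"
  assumes "invertible A"
  shows "proj_map A ` proj_points \<subseteq> proj_points"
proof
  fix P assume "P \<in> proj_map A ` proj_points"
  then obtain v where "P = proj_point (A *v v)" "v \<in> UNIV - {0}"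
    unfolding proj_points_eq_image image_image proj_map_proj_point by (rule imageE)
  moreover have "A *v v \<noteq> 0"
    using \<open>v \<in> UNIV - {0}\<close> injD[OF inj_matrix_vector_mult[OF assms], of v 0] by auto
  ultimately show "P \<in> proj_points" by (simp add: proj_points_eq_image)
qed

lemma proj_map_funpow_perm_order:
  fixes A :: "'k::{field,finite} ^ 'n ^ 'n"
  assumes "invertible A"
  shows "\<forall>P\<in>proj_points. (proj_map A ^^ perm_order (proj_map A) proj_points) P = P"
proof -
  have "bij ((*v) A)"
    using inj_matrix_vector_mult[OF assms] by (simp add: bij_def finite_UNIV_inj_surj)
  then have "permutation ((*v) A)" by (simp add: permutation)
  then obtain n where n: "((*v) A) ^^ n = id" "n > 0" by (rule permutation_is_nilpotent)
  have "\<forall>P\<in>proj_points. (proj_map A ^^ n) P = P"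
    using n(1) by (auto simp: proj_points_eq_image funpow_proj_map_proj_point)
  then show ?thesis
    using LeastI[of "\<lambda>k. 0 < k \<and> (\<forall>P\<in>proj_points. (proj_map A ^^ k) P = P)" n] n(2)
    unfolding perm_order_def by blast
qed

lemma matrix_funpow_scalarE:
  fixes A :: "'k::{field,finite} ^ 'n ^ 'n"
  assumes "CHAR('k) = 2" "invertible A" "\<forall>P\<in>proj_points. (proj_map A ^^ 2 ^ r) P = P"
  obtains \<nu> where "\<nu> \<noteq> 0" "\<And>v. (((*v) A) ^^ 2 ^ r) v = \<nu> ^ 2 ^ r *s v"
proof -
  let ?g = "((*v) A) ^^ 2 ^ r"
  have "\<exists>c. ?g v = c *s v" for v
  proof (cases "v = 0")
    case False
    then have "proj_point (?g v) = proj_point v"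
      using assms(3) by (auto simp: proj_points_eq_image funpow_proj_map_proj_point)
    then show ?thesis by (auto simp: proj_point_eq_iff)
  next
    case True
    have "(((*v) A) ^^ k) 0 = 0" for k by (induction k) simp_all
    then show ?thesis using True by (auto intro: exI[of _ 0])
  qed
  then obtain \<mu> where \<mu>: "\<And>v. ?g v = \<mu> *s v"
    using scalar_if_every_vector_eigenE[OF linear_funpow[OF matrix_vector_mul_linear_gen]] by metis
  obtain \<nu> where \<nu>: "\<nu> ^ 2 ^ r = \<mu>" using frobenius_power_surjE[OF assms(1)] by metis
  have "inj ?g" using inj_fn[OF inj_matrix_vector_mult[OF assms(2)]] .
  then have "\<mu> \<noteq> 0"
    using \<mu> injD[of ?g "axis undefined 1" 0] by (auto simp: axis_eq_0_iff)
  then show ?thesis using that \<mu> \<nu> by auto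
qed

lemma funpow_proj_map_fixed_iff:
  fixes A :: "'k::field ^ 'n ^ 'n"
  assumes char: "CHAR('k) = 2" and "\<nu> \<noteq> 0"
    and scalar: "\<And>v. (((*v) A) ^^ 2 ^ r) v = \<nu> ^ 2 ^ r *s v"
    and "i \<le> r" "v \<noteq> 0"
  shows "(proj_map A ^^ 2 ^ i) (proj_point v) = proj_point v
    \<longleftrightarrow> ((\<lambda>w. A *v w - \<nu> *s w) ^^ 2 ^ i) v = 0"
proof -
  let ?f = "(*v) A"
  have "(proj_map A ^^ 2 ^ i) (proj_point v) = proj_point v
      \<longleftrightarrow> (\<exists>c. c \<noteq> 0 \<and> (?f ^^ 2 ^ i) v = c *s v)"
    by (simp add: funpow_proj_map_proj_point proj_point_eq_iff)
  also have "\<dots> \<longleftrightarrow> (?f ^^ 2 ^ i) v = \<nu> ^ 2 ^ i *s v"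
  proof
    assume "\<exists>c. c \<noteq> 0 \<and> (?f ^^ 2 ^ i) v = c *s v"
    then obtain c where c: "(?f ^^ 2 ^ i) v = c *s v" by blast
    have r: "(2::nat) ^ i * 2 ^ (r - i) = 2 ^ r" using \<open>i \<le> r\<close> by (simp flip: power_add)
    have "c ^ 2 ^ (r - i) *s v = \<nu> ^ 2 ^ r *s v"
      using funpow_mult_eigen[OF c vec.scale, of "2 ^ (r - i)"] scalar by (auto simp: r)
    then have "c ^ 2 ^ (r - i) = (\<nu> ^ 2 ^ i) ^ 2 ^ (r - i)"
      using \<open>v \<noteq> 0\<close> by (simp add: vector_mul_rcancel flip: power_mult r)
    then have "c = \<nu> ^ 2 ^ i" by (rule frobenius_power_inj[OF char])
    then show "(?f ^^ 2 ^ i) v = \<nu> ^ 2 ^ i *s v" using c by simp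
  next
    assume "(?f ^^ 2 ^ i) v = \<nu> ^ 2 ^ i *s v"
    then show "\<exists>c. c \<noteq> 0 \<and> (?f ^^ 2 ^ i) v = c *s v"
      using \<open>\<nu> \<noteq> 0\<close> by (intro exI[of _ "\<nu> ^ 2 ^ i"]) simp
  qed
  also have "\<dots> \<longleftrightarrow> ((\<lambda>w. A *v w - \<nu> *s w) ^^ 2 ^ i) v = 0"
    using funpow_two_power_minus_scale[OF char matrix_vector_mul_linear_gen[of A], where c=\<nu> and i=i] by simp
  finally show ?thesis .
qed

lemma card_fixed_proj_points:
  fixes A :: "'k::{field,finite} ^ 'n ^ 'n"
  assumes "CHAR('k) = 2" "\<nu> \<noteq> 0" "\<And>v. (((*v) A) ^^ 2 ^ r) v = \<nu> ^ 2 ^ r *s v" "i \<le> r"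
  shows "(CARD('k) - 1) * card {P\<in>proj_points. (proj_map A ^^ 2 ^ i) P = P}
    = CARD('k) ^ vec.dim {v. ((\<lambda>w. A *v w - \<nu> *s w) ^^ 2 ^ i) v = 0} - 1"
proof -
  let ?K = "{v. ((\<lambda>w. A *v w - \<nu> *s w) ^^ 2 ^ i) v = 0}"
  have K: "vec.subspace ?K" by (rule subspace_funpow_kernel[OF linear_matrix_minus_scale])
  have "(proj_map A ^^ 2 ^ i) P = P \<longleftrightarrow> P \<subseteq> ?K" if P: "P \<in> proj_points" for P
  proof -
    obtain v where "P = proj_point v" "v \<in> UNIV - {0}"
      using P unfolding proj_points_eq_image by (rule imageE)
    then show ?thesis
      using funpow_proj_map_fixed_iff[OF assms] proj_point_subset_iff[OF K] by simp
  qed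
  then have "{P\<in>proj_points. (proj_map A ^^ 2 ^ i) P = P} = {P\<in>proj_points. P \<subseteq> ?K}"
    by blast
  then show ?thesis
    using card_proj_points_subspace[OF K] card_subspace[OF K] by simp
qed

lemma cycle_count_proj_map_eqs:
  fixes A :: "'k::{field,finite} ^ 'n ^ 'n"
  assumes char: "CHAR('k) = 2" and "invertible A" and "\<nu> \<noteq> 0"
    and scalar: "\<And>v. (((*v) A) ^^ 2 ^ r) v = \<nu> ^ 2 ^ r *s v"
  defines "c i \<equiv> cycle_count (proj_map A) proj_points (2 ^ i)"
    and "d i \<equiv> vec.dim {v. ((\<lambda>w. A *v w - \<nu> *s w) ^^ 2 ^ i) v = 0}"
  shows "(CARD('k) - 1) * c 0 = CARD('k) ^ d 0 - 1"
    and "1 \<le> i \<Longrightarrow> i \<le> r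
      \<Longrightarrow> (CARD('k) - 1) * (2 ^ i * c i) = CARD('k) ^ d i - CARD('k) ^ d (i - 1)"
proof -
  let ?\<sigma> = "proj_map A" and ?q = "CARD('k)"
  let ?F = "\<lambda>i. card {P\<in>proj_points. (?\<sigma> ^^ 2 ^ i) P = P}"
  have "\<forall>P\<in>proj_points. (?\<sigma> ^^ 2 ^ r) P = P"
    using \<open>\<nu> \<noteq> 0\<close> by (auto simp: proj_points_eq_image funpow_proj_map_proj_point scalar proj_point_scale)
  note perm = finite proj_map_image_proj_points[OF \<open>invertible A\<close>] this
  have F: "(?q - 1) * ?F i = ?q ^ d i - 1" if "i \<le> r" for i
    unfolding d_def using card_fixed_proj_points[OF char \<open>\<nu> \<noteq> 0\<close> scalar that] .
  show "(?q - 1) * c 0 = ?q ^ d 0 - 1"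
    using F[of 0] cycle_count_one_eq_card_fixed_points[OF perm] by (simp add: c_def)
  assume "1 \<le> i" "i \<le> r"
  have "(?q - 1) * (2 ^ i * c i) = (?q - 1) * ?F i - (?q - 1) * ?F (i - 1)"
    using cycle_count_two_power_eq_card_diff[OF perm, of i] \<open>1 \<le> i\<close>
    by (simp add: c_def diff_mult_distrib2)
  also have "\<dots> = ?q ^ d i - ?q ^ d (i - 1)"
    using F[of i] F[of "i - 1"] \<open>i \<le> r\<close> by simp
  finally show "(?q - 1) * (2 ^ i * c i) = ?q ^ d i - ?q ^ d (i - 1)" .
qed

lemma proj_map_cycle_count_dimsE:
  fixes A :: "'k::{field,finite} ^ 'n ^ 'n"
  assumes char: "CHAR('k) = 2" and "invertible A"
    and "\<forall>P\<in>proj_points. (proj_map A ^^ 2 ^ r) P = P"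
  defines "c i \<equiv> cycle_count (proj_map A) proj_points (2 ^ i)"
  obtains d where "mono d" "d r = CARD('n)" "1 \<le> d 0" "\<And>i. d i < d (Suc i) \<Longrightarrow> 2 ^ i \<le> d i"
    and "(CARD('k) - 1) * c 0 = CARD('k) ^ d 0 - 1"
    and "\<And>i. 1 \<le> i \<Longrightarrow> i \<le> r
      \<Longrightarrow> (CARD('k) - 1) * (2 ^ i * c i) = CARD('k) ^ d i - CARD('k) ^ d (i - 1)"
proof -
  obtain \<nu> where \<nu>: "\<nu> \<noteq> 0" "\<And>v. (((*v) A) ^^ 2 ^ r) v = \<nu> ^ 2 ^ r *s v"
    using matrix_funpow_scalarE[OF assms(1-3)] by blast
  have "\<And>v. ((\<lambda>w. A *v w - \<nu> *s w) ^^ 2 ^ r) v = 0"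
    using funpow_two_power_minus_scale[OF char matrix_vector_mul_linear_gen[of A]] \<nu>(2) by simp
  from nilpotent_kernel_dims[OF linear_matrix_minus_scale this]
    cycle_count_proj_map_eqs[OF char \<open>invertible A\<close> \<nu>]
  show ?thesis using that unfolding c_def by blast
qed

section \<open>Counting\<close>

lemma odd_if_mult_pred_eq_power_pred:
  fixes q c d :: nat
  assumes "even q" "0 < q" "1 \<le> d" "(q - 1) * c = q ^ d - 1"
  shows "odd c"
proof -
  have "even (q ^ d)" using assms(1,3) by simp
  then have "odd (q ^ d - 1)" using assms(2) by simp
  then show ?thesis using assms(4) by (metis even_mult_iff)
qed

lemma even_if_mult_pred_eq_power_diff:
  fixes m i c a b :: nat
  assumes "2 \<le> m" "1 \<le> i" "a \<le> b" "a < b \<Longrightarrow> 2 ^ (i - 1) \<le> a"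
    and eq: "(2 ^ m - 1) * (2 ^ i * c) = (2 ^ m) ^ b - (2 ^ m) ^ a"
  shows "even c"
proof (cases "a = b")
  case True
  moreover have "1 < (2::nat) ^ m" using assms(1) by (intro one_less_power) simp_all
  ultimately show ?thesis using eq by simp
next
  case False
  have "i + 1 \<le> 2 ^ i" by (induction i) simp_all
  also have "\<dots> = 2 * 2 ^ (i - 1)" using assms(2) by (simp flip: power_Suc)
  also have "\<dots> \<le> m * a" using False assms(1,3,4) by (intro mult_mono) simp_all
  finally have "(2::nat) ^ (i + 1) dvd 2 ^ (m * a)" by (rule le_imp_power_dvd)
  then have "(2::nat) ^ (i + 1) dvd (2 ^ m) ^ a" by (simp only: power_mult)
  moreover have "(2 ^ m) ^ b - (2 ^ m) ^ a = (2 ^ m) ^ a * ((2 ^ m) ^ (b - a) - 1 :: nat)"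
    using assms(3) by (simp add: right_diff_distrib' flip: power_add)
  ultimately have "2 ^ (i + 1) dvd (2 ^ m - 1) * (2 ^ i * c)" using eq by simp
  moreover have "coprime (2 ^ (i + 1)) (2 ^ m - 1 :: nat)" using assms(1) by simp
  ultimately have "2 ^ i * 2 dvd 2 ^ i * c" by (simp add: coprime_dvd_mult_right_iff)
  then show ?thesis by simp
qed

lemma mono_one_two_stepE:
  fixes d :: "nat \<Rightarrow> nat"
  assumes "mono d" "d 0 = 1" "d r = 2"
  obtains j where "1 \<le> j" "j \<le> r" "\<And>i. i < j \<Longrightarrow> d i = 1" "\<And>i. j \<le> i \<Longrightarrow> i \<le> r \<Longrightarrow> d i = 2"
proof -
  define j where "j = (LEAST j. d j = 2)"
  have d_le: "d i \<le> 2" if "i \<le> r" for i using monoD[OF assms(1) that] assms(3) by simp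
  have dj: "d j = 2" and "j \<le> r"
    using LeastI[of "\<lambda>j. d j = 2" r] Least_le[of "\<lambda>j. d j = 2" r] assms(3) by (simp_all add: j_def)
  have "1 \<le> j" using dj assms(2) by (cases j) auto
  moreover have "d i = 1" if "i < j" for i
  proof -
    have "d i \<noteq> 2" using that unfolding j_def by (rule not_less_Least)
    moreover have "d 0 \<le> d i" using monoD[OF assms(1)] by simp
    moreover have "d i \<le> 2" using d_le that \<open>j \<le> r\<close> by simp
    ultimately show ?thesis using assms(2) by linarith
  qed
  moreover have "d i = 2" if "j \<le> i" "i \<le> r" for i
    using d_le[OF that(2)] monoD[OF assms(1) that(1)] dj by linarith
  ultimately show ?thesis using that \<open>j \<le> r\<close> by blast
qed

lemma dim_two_cycle_count_dichotomy:
  fixes q r :: nat and c d :: "nat \<Rightarrow> nat"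
  assumes "1 < q" "mono d" "d r = 2" "1 \<le> d 0"
    and c0: "(q - 1) * c 0 = q ^ d 0 - 1"
    and ci: "\<And>i. 1 \<le> i \<Longrightarrow> i \<le> r \<Longrightarrow> (q - 1) * (2 ^ i * c i) = q ^ d i - q ^ d (i - 1)"
    and even: "\<And>i. 1 \<le> i \<Longrightarrow> i \<le> r \<Longrightarrow> even (c i)"
  shows "(c 0 = q + 1 \<and> (\<forall>i\<in>{1..r}. c i = 0))
    \<or> (c 0 = 1 \<and> (\<exists>!j. j \<in> {1..r} \<and> c j \<noteq> 0)
       \<and> (\<forall>j\<in>{1..r}. c j \<noteq> 0 \<longrightarrow> real (c j) = real q / 2 ^ j \<and> real q / 2 ^ j > 1))"
proof -
  have cancel: "x = y" if "(q - 1) * x = (q - 1) * y" for x y using that \<open>1 < q\<close> by simp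
  have c_zero: "c i = 0" if "1 \<le> i" "i \<le> r" "d (i - 1) = d i" for i
    using ci[OF that(1,2)] that(3) \<open>1 < q\<close> by simp
  have "d 0 \<le> 2" using monoD[OF \<open>mono d\<close>, of 0 r] \<open>d r = 2\<close> by simp
  then consider "d 0 = 2" | "d 0 = 1" using \<open>1 \<le> d 0\<close> by linarith
  then show ?thesis
  proof cases
    case 1
    have "q ^ 2 - 1 = (q - 1) * (q + 1)" by (cases q) (simp_all add: power2_eq_square)
    then have "(q - 1) * c 0 = (q - 1) * (q + 1)" using c0 1 by simp
    then have "c 0 = q + 1" by (rule cancel)
    moreover have "d i = 2" if "i \<le> r" for i
      using monoD[OF \<open>mono d\<close>, of 0 i] monoD[OF \<open>mono d\<close> that] 1 \<open>d r = 2\<close> by simp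
    ultimately show ?thesis using c_zero by auto
  next
    case 2
    then have "c 0 = 1" using c0 cancel[of "c 0" 1] by simp
    obtain j where j: "1 \<le> j" "j \<le> r" and d_below: "\<And>i. i < j \<Longrightarrow> d i = 1"
      and d_above: "\<And>i. j \<le> i \<Longrightarrow> i \<le> r \<Longrightarrow> d i = 2"
      using mono_one_two_stepE[OF \<open>mono d\<close> 2 \<open>d r = 2\<close>] by blast
    have c_other: "c i = 0" if "i \<in> {1..r}" "i \<noteq> j" for i
      using c_zero d_below d_above that by (cases "i < j") simp_all
    have "(q - 1) * (2 ^ j * c j) = (q - 1) * q"
      using ci[OF j] d_above[OF order_refl j(2)] d_below[of "j - 1"] j(1)
      by (simp add: power2_eq_square algebra_simps)
    then have cj: "2 ^ j * c j = q" by (rule cancel)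
    then have "c j \<noteq> 0" using \<open>1 < q\<close> by (metis mult_0_right not_one_less_zero)
    moreover have "c j \<noteq> 1" using even[OF j] by (metis odd_one)
    ultimately have "1 < c j" by linarith
    moreover have "real (c j) = real q / 2 ^ j"
      using arg_cong[OF cj, of real] by (simp add: field_simps)
    ultimately have "real (c i) = real q / 2 ^ i \<and> real q / 2 ^ i > 1"
      if "i \<in> {1..r}" "c i \<noteq> 0" for i
      using c_other[OF that(1)] that(2) cj by (cases "i = j") auto
    moreover have "\<exists>!i. i \<in> {1..r} \<and> c i \<noteq> 0"
      using j \<open>c j \<noteq> 0\<close> c_other by (intro ex1I[of _ j]) fastforce+
    ultimately show ?thesis using \<open>c 0 = 1\<close> by blast
  qed
qed

theorem corollary3p6:
  fixes A :: "'k::{field,finite} ^ 'n ^ 'n" and m r :: nat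
  assumes "CARD('k) = 2 ^ m" and "CARD('k) \<ge> 4"
    and "CARD('n) \<ge> 2"
    and "invertible A"
    and "perm_order (proj_map A) proj_points = 2 ^ r"
  defines "c \<equiv> \<lambda>i::nat. cycle_count (proj_map A) proj_points (2 ^ i)"
  shows "odd (c 0) \<and> even (\<Sum>i\<in>{1..r}. c i) \<and>
    (CARD('n) = 2 \<longrightarrow>
      (let q = CARD('k);
           P1 = (c 0 = q + 1 \<and> (\<forall>i\<in>{1..r}. c i = 0));
           P2 = (c 0 = 1 \<and> (\<exists>!j. j \<in> {1..r} \<and> c j \<noteq> 0) \<and>
                 (\<forall>j\<in>{1..r}. c j \<noteq> 0 \<longrightarrow>
                    real (c j) = real q / 2 ^ j \<and> real q / 2 ^ j > 1))
       in (P1 \<and> \<not> P2) \<or> (\<not> P1 \<and> P2)))"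
proof -
  let ?q = "CARD('k)"
  have char: "CHAR('k) = 2" using assms(1) by (rule CHAR_eq_two_if_card_two_power)
  have "(2::nat) ^ 2 \<le> 2 ^ m" using assms(1,2) by simp
  then have "2 \<le> m" by (subst (asm) power_increasing_iff) simp_all
  have "\<forall>P\<in>proj_points. (proj_map A ^^ 2 ^ r) P = P"
    using proj_map_funpow_perm_order[OF assms(4)] assms(5) by simp
  then obtain d where d: "mono d" "d r = CARD('n)" "1 \<le> d 0" "\<And>i. d i < d (Suc i) \<Longrightarrow> 2 ^ i \<le> d i"
    and c0: "(?q - 1) * c 0 = ?q ^ d 0 - 1"
    and ci: "\<And>i. 1 \<le> i \<Longrightarrow> i \<le> r \<Longrightarrow> (?q - 1) * (2 ^ i * c i) = ?q ^ d i - ?q ^ d (i - 1)"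
    using proj_map_cycle_count_dimsE[OF char assms(4)] unfolding c_def by blast
  have odd: "odd (c 0)"
    using odd_if_mult_pred_eq_power_pred[OF _ _ d(3) c0] assms(1) \<open>2 \<le> m\<close> by simp
  have even: "even (c i)" if "1 \<le> i" "i \<le> r" for i
    using even_if_mult_pred_eq_power_diff[OF \<open>2 \<le> m\<close> that(1) _ _ ci[OF that, unfolded assms(1)]]
      d(1) d(4)[of "i - 1"] that(1) by (simp add: monoD)
  have "CARD('n) = 2 \<Longrightarrow> (c 0 = ?q + 1 \<and> (\<forall>i\<in>{1..r}. c i = 0))
    \<or> (c 0 = 1 \<and> (\<exists>!j. j \<in> {1..r} \<and> c j \<noteq> 0)
       \<and> (\<forall>j\<in>{1..r}. c j \<noteq> 0 \<longrightarrow> real (c j) = real ?q / 2 ^ j \<and> real ?q / 2 ^ j > 1))"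
    using dim_two_cycle_count_dichotomy[OF _ d(1) _ d(3) c0 ci even] assms(2) d(2) by simp
  moreover have "even (\<Sum>i\<in>{1..r}. c i)" using even by (intro dvd_sum) simp
  moreover have "c 0 = ?q + 1 \<Longrightarrow> c 0 \<noteq> 1" using assms(2) by simp
  ultimately show ?thesis unfolding Let_def using odd by blast
qed

end
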